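(* Consider the linear system $x(k+1)=Ax(k)+Bu(k)+w(k)$ with $x(k)\in\mathbb{R}^n$, $u(k)\in\mathbb{R}^m$, $A\in\mathbb{R}^{n\times n}$, $B\in\mathbb{R}^{n\times m}$, where $(w(k))_{k\ge 0}$ is an i.i.d. disturbance sequence (possibly with unbounded support) and $x(0)$ is given. Let $Q\succ 0$, $R\succ 0$, let $P$ be a stabilizing solution of the discrete algebraic Riccati equation and $K$ the corresponding gain, $$K=-(R+B^TPB)^{-1}B^TPA,\qquad P=A^TPA+A^TPBK+Q,$$ so that $A_K:=A+BK$ has all eigenvalues strictly inside the unit circle, and set $S=R+B^TPB$. Let $\mathcal{X}\subseteq\mathbb{R}^n$ and $\mathcal{U}\subseteq\mathbb{R}^m$ be convex sets containing the origin in their interior, and let $\mathcal{R}_x^{\bar p}\subseteq\mathbb{R}^n$, $\mathcal{R}_u^{\bar p}\subseteq\mathbb{R}^m$ be given sets (ellipsoids centred at the origin, as described in the context). Put $\mathcal{Z}:=\mathcal{X}\ominus\mathcal{R}_x^{\bar p}$, $\mathcal{V}:=\mathcal{U}\ominus\mathcal{R}_u^{\bar p}$, and let $\mathcal{Z}_F\subseteq\mathbb{R}^n$ be a terminal set satisfying $A_K\mathcal{Z}_F\subseteq\mathcal{Z}_F\subseteq\mathcal{Z}$ and $K\mathcal{Z}_F\subseteq\mathcal{V}$. Fix a horizon $N\ge 1$. Safety step (linear program): minimize $\sum_{k=0}^{N-1}[\alpha(k)+\beta(k)]$ over $v(0),\dots,v(N-1)\in\mathbb{R}^m$ and $\alpha(k),\beta(k)\in[0,1]$,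 $k=0,\dots,N-1$, subject to $z(0)=x(0)$, $z(k+1)=Az(k)+Bv(k)$, $z(k)\in\mathcal{X}\ominus(1-\alpha(k))\mathcal{R}_x^{\bar p}$, $v(k)\in\mathcal{U}\ominus(1-\beta(k))\mathcal{R}_u^{\bar p}$ for all $k\in\{0,\dots,N-1\}$, and $z(N)\in\mathcal{Z}_F$. Let $\alpha^*(0),\dots,\alpha^*(N-1)$, $\beta^*(0),\dots,\beta^*(N-1)$ be (part of) an optimal solution and extend them by $\alpha^*(k)=\beta^*(k)=0$ for all $k\ge N$. Performance step (solved at each time $k\ge 0$): minimize $\sum_{i=0}^{N-1}\|v_i(k)-Kz_i(k)\|_S^2+l(\xi(k))$ over $v_0(k),\dots,v_{N-1}(k)\in\mathbb{R}^m$ and $\xi(k)\in\{0,1\}$, subject to $z_{i+1}(k)=Az_i(k)+Bv_i(k)$, $z_i(k)\in\mathcal{X}\ominus(1-\alpha^*(k+i))\mathcal{R}_x^{\bar p}$, $v_i(k)\in\mathcal{U}\ominus(1-\beta^*(k+i))\mathcal{R}_u^{\bar p}$ for all $i\in\{0,\dots,N-1\}$, $z_0(k)=(1-\xi(k))x(k)+\xi(k)z_1(k-1)$, and $z_N(k)\in\mathcal{Z}_F$. Here $x(k)$ is the measured state at time $k$, $z_1(k-1)$ is the value $z_1$ from the solution computed at time $k-1$, with the convention $z_1(-1)=x(0)$, $l$ is a given linear or quadratic penalty function of $\xi$, and the input applied to the system is $u(k)=v_0(k)+K(x(k)-z_0(k))$. Then, if the safety-step linear program has a feasible solution, the performance-step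 optimization problem is recursively feasible: it is feasible at time $k=0$, and whenever it is feasible at time $k$ it is feasible at time $k+1$ (for any realization of the disturbance), hence it is feasible at every time $k\ge 0$.
   Context: For sets $A,B\subseteq\mathbb{R}^n$, $A\ominus B:=\{a\mid a+b\in A\ \forall b\in B\}$ (Pontryagin difference), and for a scalar $c$, $cB:=\{cb\mid b\in B\}$. $\|x\|_S^2=x^TSx$. The sets $\mathcal{R}_x^{\bar p}$ and $\mathcal{R}_u^{\bar p}$ are probabilistic reachable sets of the target probability levels $\bar p_x,\bar p_u\in[0,1]$ for the error $e(k+1)=A_Ke(k)+w(k)$ and for $Ke(k)$ respectively; in the paper they are the ellipsoids $\{x\mid x^T\Sigma_\infty^{-1}x\le\tilde p_x\}$ and $\{u \mid u^T(K\Sigma_\infty K^T)^{-1}u\le \tilde p_u\}$, where $\Sigma_\infty$ solves $A_K\Sigma_\infty A_K^T-\Sigma_\infty+\mathrm{var}(w)=0$ and $\tilde p=n/(1-\bar p)$ (or the inverse chi-squared CDF $\chi^2_n(\bar p)$ for Gaussian $w$); the disturbance is assumed to have zero mean and positive definite variance. *)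

theory Defs
  imports "HOL-Analysis.Analysis"
begin

definition pdiff :: "'a::ab_group_add set \<Rightarrow> 'a set \<Rightarrow> 'a set" where
  "pdiff A B = {a. \<forall>b\<in>B. a + b \<in> A}"

definition set_scale :: "real \<Rightarrow> 'a::real_vector set \<Rightarrow> 'a set" where
  "set_scale c B = (\<lambda>b. c *\<^sub>R b) ` B"

definition pos_def :: "real^'n^'n \<Rightarrow> bool" where
  "pos_def M \<longleftrightarrow> transpose M = M \<and> (\<forall>x. x \<noteq> 0 \<longrightarrow> x \<bullet> (M *v x) > 0)"

definition pos_semidef :: "real^'n^'n \<Rightarrow> bool" where
  "pos_semidef M \<longleftrightarrow> transpose M = M \<and> (\<forall>x. x \<bullet> (M *v x) \<ge> 0)"

definition cmat :: "real^'n^'m \<Rightarrow> complex^'n^'m" where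
  "cmat M = (\<chi> i j. complex_of_real (M $ i $ j))"

definition schur_stable :: "real^'n^'n \<Rightarrow> bool" where
  "schur_stable M \<longleftrightarrow>
     (\<forall>(lam::complex) (v::complex^'n). v \<noteq> 0 \<and> cmat M *v v = lam *s v \<longrightarrow> cmod lam < 1)"

fun traj :: "real^'n^'n \<Rightarrow> real^'m^'n \<Rightarrow> real^'n \<Rightarrow> (nat \<Rightarrow> real^'m) \<Rightarrow> nat \<Rightarrow> real^'n" where
  "traj A B z0 v 0 = z0"
| "traj A B z0 v (Suc k) = A *v traj A B z0 v k + B *v v k"

definition safety_feasible ::
  "real^'n^'n \<Rightarrow> real^'m^'n \<Rightarrow> (real^'n) set \<Rightarrow> (real^'m) set \<Rightarrow> (real^'n) set \<Rightarrow> (real^'m) set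
   \<Rightarrow> (real^'n) set \<Rightarrow> nat \<Rightarrow> real^'n \<Rightarrow> (nat \<Rightarrow> real^'m) \<Rightarrow> (nat \<Rightarrow> real) \<Rightarrow> (nat \<Rightarrow> real) \<Rightarrow> bool" where
  "safety_feasible A B X U Rx Ru ZF N x0 v \<alpha> \<beta> \<longleftrightarrow>
     (\<forall>k<N. \<alpha> k \<in> {0..1} \<and> \<beta> k \<in> {0..1}
        \<and> traj A B x0 v k \<in> pdiff X (set_scale (1 - \<alpha> k) Rx)
        \<and> v k \<in> pdiff U (set_scale (1 - \<beta> k) Ru))
     \<and> traj A B x0 v N \<in> ZF"

definition safety_optimal ::
  "real^'n^'n \<Rightarrow> real^'m^'n \<Rightarrow> (real^'n) set \<Rightarrow> (real^'m) set \<Rightarrow> (real^'n) set \<Rightarrow> (real^'m) set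
   \<Rightarrow> (real^'n) set \<Rightarrow> nat \<Rightarrow> real^'n \<Rightarrow> (nat \<Rightarrow> real^'m) \<Rightarrow> (nat \<Rightarrow> real) \<Rightarrow> (nat \<Rightarrow> real) \<Rightarrow> bool" where
  "safety_optimal A B X U Rx Ru ZF N x0 v \<alpha> \<beta> \<longleftrightarrow>
     safety_feasible A B X U Rx Ru ZF N x0 v \<alpha> \<beta> \<and>
     (\<forall>v' \<alpha>' \<beta>'. safety_feasible A B X U Rx Ru ZF N x0 v' \<alpha>' \<beta>' \<longrightarrow>
        (\<Sum>k<N. \<alpha> k + \<beta> k) \<le> (\<Sum>k<N. \<alpha>' k + \<beta>' k))"

definition perf_init :: "real^'n \<Rightarrow> real^'n \<Rightarrow> real \<Rightarrow> real^'n" where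
  "perf_init xk zprev \<xi> = (1 - \<xi>) *\<^sub>R xk + \<xi> *\<^sub>R zprev"

text \<open>Feasibility of the performance-step problem at time k, with measured state xk,
  previous first predicted state zprev = z_1(k-1), decision variables v_0..v_{N-1} and xi.
  (The cost only matters for optimality, not for feasibility.)\<close>
definition perf_feasible ::
  "real^'n^'n \<Rightarrow> real^'m^'n \<Rightarrow> (real^'n) set \<Rightarrow> (real^'m) set \<Rightarrow> (real^'n) set \<Rightarrow> (real^'m) set
   \<Rightarrow> (real^'n) set \<Rightarrow> nat \<Rightarrow> (nat \<Rightarrow> real) \<Rightarrow> (nat \<Rightarrow> real) \<Rightarrow> nat \<Rightarrow> real^'n \<Rightarrow> real^'n
   \<Rightarrow> (nat \<Rightarrow> real^'m) \<Rightarrow> real \<Rightarrow> bool" where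
  "perf_feasible A B X U Rx Ru ZF N \<alpha>s \<beta>s k xk zprev v \<xi> \<longleftrightarrow>
     \<xi> \<in> {0, 1} \<and>
     (\<forall>i<N. traj A B (perf_init xk zprev \<xi>) v i \<in> pdiff X (set_scale (1 - \<alpha>s (k + i)) Rx)
          \<and> v i \<in> pdiff U (set_scale (1 - \<beta>s (k + i)) Ru))
     \<and> traj A B (perf_init xk zprev \<xi>) v N \<in> ZF"

end

theory Submission
  imports Defs
begin

text \<open>With \<open>\<xi> = 0\<close> at time 0 the performance step coincides with the safety step, so any
  safety-feasible solution is performance-feasible. Recursive feasibility uses \<open>\<xi> = 1\<close>: the
  nominal state is reset to the previously predicted \<open>z\<^sub>1\<close>, which makes the problem at time
  \<open>k + 1\<close> independent of the disturbance. The shifted input sequence, completed by the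
  terminal controller \<open>K z\<^sub>N\<close>, reproduces the old prediction on the first \<open>N - 1\<close> steps; the
  new last step is covered by the terminal set, because \<open>\<alpha>\<^sup>*, \<beta>\<^sup>*\<close> vanish beyond the horizon
  and \<open>Z\<^sub>F\<close> is invariant under \<open>A + B K\<close> and satisfies the untightened constraints.
  Feasibility needs nothing else.\<close>

lemma traj_cong: "(\<And>j. j < i \<Longrightarrow> v j = w j) \<Longrightarrow> traj A B z v i = traj A B z w i"
  by (induction i) auto

lemma traj_Suc_from_first_step:
  "traj A B z v (Suc i) = traj A B (traj A B z v 1) (\<lambda>j. v (Suc j)) i"
  by (induction i) auto

lemma set_scale_one [simp]: "set_scale 1 R = R"
  unfolding set_scale_def by simp

lemma perf_init_0 [simp]: "perf_init x z 0 = x"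
  and perf_init_1 [simp]: "perf_init x z 1 = z"
  unfolding perf_init_def by simp_all

definition shift_append :: "nat \<Rightarrow> (nat \<Rightarrow> 'a) \<Rightarrow> 'a \<Rightarrow> nat \<Rightarrow> 'a" where
  "shift_append N v u = (\<lambda>i. if i < N - 1 then v (Suc i) else u)"

lemma traj_shift_append:
  assumes "i \<le> N - 1"
  shows "traj A B (traj A B z v 1) (shift_append N v u) i = traj A B z v (Suc i)"
proof -
  have "traj A B (traj A B z v 1) (shift_append N v u) i
      = traj A B (traj A B z v 1) (\<lambda>j. v (Suc j)) i"
    using assms by (intro traj_cong) (auto simp: shift_append_def)
  then show ?thesis by (simp only: traj_Suc_from_first_step)
qed

lemma traj_shift_append_terminal:
  assumes "N \<ge> 1"
  shows "traj A B (traj A B z v 1) (shift_append N v (K *v traj A B z v N)) N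
       = (A + B ** K) *v traj A B z v N"
proof -
  let ?v' = "shift_append N v (K *v traj A B z v N)"
  have "traj A B (traj A B z v 1) ?v' N
      = A *v traj A B (traj A B z v 1) ?v' (N - 1) + B *v ?v' (N - 1)"
    using assms by (metis Suc_diff_1 less_le_trans zero_less_one traj.simps(2))
  also have "\<dots> = A *v traj A B z v N + B *v (K *v traj A B z v N)"
    using assms traj_shift_append[of "N - 1" N A B z v] by (simp add: shift_append_def)
  also have "\<dots> = (A + B ** K) *v traj A B z v N"
    by (simp add: matrix_vector_mul_assoc matrix_vector_mult_add_rdistrib)
  finally show ?thesis .
qed

lemma perf_feasible_of_safety_feasible:
  assumes "safety_feasible A B X U Rx Ru ZF N x0 v \<alpha> \<beta>"
  shows "perf_feasible A B X U Rx Ru ZF N \<alpha> \<beta> 0 x0 x0 v 0"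
  using assms unfolding safety_feasible_def perf_feasible_def by simp

lemma perf_feasible_Suc:
  fixes A :: "real^'n^'n" and B :: "real^'m^'n" and K :: "real^'n^'m"
  assumes feasible: "perf_feasible A B X U Rx Ru ZF N \<alpha> \<beta> k xk zprev v \<xi>"
    and ZF_inv: "(\<lambda>z. (A + B ** K) *v z) ` ZF \<subseteq> ZF"
    and ZF_X: "ZF \<subseteq> pdiff X Rx"
    and ZF_U: "(\<lambda>z. K *v z) ` ZF \<subseteq> pdiff U Ru"
    and N_pos: "N \<ge> 1"
    and \<alpha>_end: "\<alpha> (k + N) = 0" and \<beta>_end: "\<beta> (k + N) = 0"
  defines "z \<equiv> perf_init xk zprev \<xi>"
  shows "perf_feasible A B X U Rx Ru ZF N \<alpha> \<beta> (Suc k) xk' (traj A B z v 1)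
           (shift_append N v (K *v traj A B z v N)) 1"
proof -
  let ?zN = "traj A B z v N"
  let ?v' = "shift_append N v (K *v ?zN)"
  have old: "traj A B z v i \<in> pdiff X (set_scale (1 - \<alpha> (k + i)) Rx)
      \<and> v i \<in> pdiff U (set_scale (1 - \<beta> (k + i)) Ru)" if "i < N" for i
    using feasible that unfolding perf_feasible_def z_def by blast
  have zN: "?zN \<in> ZF"
    using feasible unfolding perf_feasible_def z_def by blast
  have shifted: "traj A B (traj A B z v 1) ?v' i = traj A B z v (Suc i)" if "i < N" for i
    using that by (intro traj_shift_append) simp
  have new: "traj A B (traj A B z v 1) ?v' i \<in> pdiff X (set_scale (1 - \<alpha> (Suc k + i)) Rx)
      \<and> ?v' i \<in> pdiff U (set_scale (1 - \<beta> (Suc k + i)) Ru)" if "i < N" for i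
  proof (cases "i < N - 1")
    case True
    then have "?v' i = v (Suc i)" "Suc i < N"
      by (auto simp: shift_append_def)
    then show ?thesis
      using old[of "Suc i"] shifted[OF that] by (simp del: traj.simps)
  next
    case False
    with that have "Suc i = N" "Suc k + i = k + N" "?v' i = K *v ?zN"
      by (auto simp: shift_append_def)
    then show ?thesis
      using zN ZF_X ZF_U \<alpha>_end \<beta>_end shifted[OF that] by (auto simp del: traj.simps)
  qed
  have "traj A B (traj A B z v 1) ?v' N = (A + B ** K) *v ?zN"
    by (rule traj_shift_append_terminal[OF N_pos])
  then have "traj A B (traj A B z v 1) ?v' N \<in> ZF"
    using zN ZF_inv by (auto simp del: traj.simps)
  with new show ?thesis
    unfolding perf_feasible_def by simp
qed

theorem theorem1:
  fixes A :: "real^'n^'n" and B :: "real^'m^'n" and Q P :: "real^'n^'n" and R :: "real^'m^'m"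
    and K :: "real^'n^'m" and S :: "real^'m^'m"
    and X ZF Rx :: "(real^'n) set" and U Ru :: "(real^'m) set"
    and \<Sigma> W :: "real^'n^'n" and px pu :: real
    and N :: nat and x0 :: "real^'n"
    and \<alpha>s \<beta>s :: "nat \<Rightarrow> real" and vs :: "nat \<Rightarrow> real^'m"
  assumes Q_pd: "pos_def Q" and R_pd: "pos_def R"
    and K_def: "K = - (matrix_inv (R + transpose B ** P ** B) ** transpose B ** P ** A)"
    and P_sym: "transpose P = P"
    and DARE: "P = transpose A ** P ** A + transpose A ** P ** B ** K + Q"
    and stab: "schur_stable (A + B ** K)"
    and S_def: "S = R + transpose B ** P ** B"
    and X_cvx: "convex X" and X_int: "0 \<in> interior X"
    and U_cvx: "convex U" and U_int: "0 \<in> interior U"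
    and W_pd: "pos_def W"
    and Sigma_lyap: "(A + B ** K) ** \<Sigma> ** transpose (A + B ** K) - \<Sigma> + W = 0"
    and px_pos: "px > 0" and pu_pos: "pu > 0"
    and Rx_def: "Rx = {e. e \<bullet> (matrix_inv \<Sigma> *v e) \<le> px}"
    and Ru_def: "Ru = {u. u \<bullet> (matrix_inv (K ** \<Sigma> ** transpose K) *v u) \<le> pu}"
    and ZF_inv: "(\<lambda>z. (A + B ** K) *v z) ` ZF \<subseteq> ZF"
    and ZF_Z: "ZF \<subseteq> pdiff X Rx"
    and ZF_V: "(\<lambda>z. K *v z) ` ZF \<subseteq> pdiff U Ru"
    and N_pos: "N \<ge> 1"
    and LP_feasible: "\<exists>v \<alpha> \<beta>. safety_feasible A B X U Rx Ru ZF N x0 v \<alpha> \<beta>"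
    and LP_opt: "safety_optimal A B X U Rx Ru ZF N x0 vs \<alpha>s \<beta>s"
    and \<alpha>_ext: "\<forall>k\<ge>N. \<alpha>s k = 0" and \<beta>_ext: "\<forall>k\<ge>N. \<beta>s k = 0"
  shows "(\<exists>v \<xi>. perf_feasible A B X U Rx Ru ZF N \<alpha>s \<beta>s 0 x0 x0 v \<xi>)
    \<and> (\<forall>k xk zprev v \<xi> w.
          perf_feasible A B X U Rx Ru ZF N \<alpha>s \<beta>s k xk zprev v \<xi> \<longrightarrow>
          (let z0 = perf_init xk zprev \<xi>;
               u = v 0 + K *v (xk - z0);
               xk' = A *v xk + B *v u + w
           in \<exists>v' \<xi>'. perf_feasible A B X U Rx Ru ZF N \<alpha>s \<beta>s (Suc k) xk'
                         (traj A B z0 v 1) v' \<xi>'))"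
proof -
  have "perf_feasible A B X U Rx Ru ZF N \<alpha>s \<beta>s 0 x0 x0 vs 0"
    using LP_opt perf_feasible_of_safety_feasible unfolding safety_optimal_def by blast
  moreover have "\<exists>v' \<xi>'. perf_feasible A B X U Rx Ru ZF N \<alpha>s \<beta>s (Suc k) xk'
                    (traj A B (perf_init xk zprev \<xi>) v 1) v' \<xi>'"
    if "perf_feasible A B X U Rx Ru ZF N \<alpha>s \<beta>s k xk zprev v \<xi>" for k xk zprev v \<xi> xk'
  proof -
    have "\<alpha>s (k + N) = 0" "\<beta>s (k + N) = 0"
      using \<alpha>_ext \<beta>_ext by simp_all
    from perf_feasible_Suc[OF that ZF_inv ZF_Z ZF_V N_pos this]
    show ?thesis by blast
  qed
  ultimately show ?thesis
    by (auto simp: Let_def)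
qed

end
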